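(* Let $M\ge1$, let $k\in\mathfrak{L}_M$, set $u=\min\{\mathbb{1},\tilde{k}\}$, and let $b\in\mathbb{Z}^{M+1}$ with $u\leq b\leq\min\{k,\tilde{k}\}$. Then \[ \#\left\{\mathsf{p}\in\mathsf{S}_M\,|\,(\kappa(\mathsf{p}),\beta(\mathsf{p}))=(k,b)\right\}=\binom{k}{b}\binom{\tilde{k}-u}{b-u}. \]
   Context: Fix depths $z_{-1}<z_0<\cdots<z_M$. A (reflection) scattering sequence is a finite sequence $\mathsf{p}=(\mathsf{p}_0,\ldots,\mathsf{p}_L)$ with $L\geq 2$, $\mathsf{p}_0=\mathsf{p}_L=z_{-1}$, $\mathsf{p}_i\in\{z_0,\ldots,z_M\}$ for $1\le i\le L-1$, and for every $0\le i\le L-1$ there is $-1\le j\le M-1$ with $\{\mathsf{p}_i,\mathsf{p}_{i+1}\}=\{z_j,z_{j+1}\}$; $\mathsf{S}_M$ is the set of these. For $0\le n\le M$, $k_n$ is the number of maximal runs of consecutive indices $i$ with $\mathsf{p}_i\in\{z_n,\ldots,z_M\}$, and $b_n$ the number of those runs of length at least 2; $\kappa(\mathsf{p})=(k_0,\ldots,k_M)$, $\beta(\mathsf{p})=(b_0,\ldots,b_M)$. $\mathfrak{L}_M=\{(k_0,\ldots,k_M)\in\mathbb{Z}_{\ge0}^{M+1}: k_0=1\text{ and for all }n\le M-1,\ k_n=0\Rightarrow k_{n+1}=0\}$. Notation: $\tilde{k}=(k_1,\ldots,k_M,0)$; $\mathbb{1}=(1,\ldots,1)$; $\min$, $\le$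 and subtraction entrywise; $\binom{x}{y}=\prod_{n=0}^M\binom{x_n}{y_n}$. *)

theory Defs
  imports Complex_Main
begin

text \<open>Depths z(-1) < z 0 < ... < z M are given by a function z :: int => real,
strictly increasing on {-1..M}. A scattering sequence is a list p = [p_0,...,p_L].\<close>

definition scat_seqs :: "(int \<Rightarrow> real) \<Rightarrow> nat \<Rightarrow> real list set" where
  "scat_seqs z M = {p. \<exists>L. length p = Suc L \<and> L \<ge> 2 \<and>
      p ! 0 = z (-1) \<and> p ! L = z (-1) \<and>
      (\<forall>i. 1 \<le> i \<and> i \<le> L - 1 \<longrightarrow> p ! i \<in> z ` {0..int M}) \<and>
      (\<forall>i<L. \<exists>j\<in>{-1..int M - 1}. {p ! i, p ! Suc i} = {z j, z (j + 1)}) }"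

definition runs_count :: "nat \<Rightarrow> (nat \<Rightarrow> bool) \<Rightarrow> nat \<Rightarrow> nat" where
  "runs_count m P L = card {(a, b). a \<le> b \<and> b \<le> L \<and> b - a + 1 \<ge> m \<and>
      (\<forall>i\<in>{a..b}. P i) \<and> (a = 0 \<or> \<not> P (a - 1)) \<and> (b = L \<or> \<not> P (Suc b))}"

definition kappa :: "(int \<Rightarrow> real) \<Rightarrow> nat \<Rightarrow> real list \<Rightarrow> nat \<Rightarrow> nat" where
  "kappa z M p n = runs_count 1 (\<lambda>i. p ! i \<in> z ` {int n..int M}) (length p - 1)"

definition beta :: "(int \<Rightarrow> real) \<Rightarrow> nat \<Rightarrow> real list \<Rightarrow> nat \<Rightarrow> nat" where
  "beta z M p n = runs_count 2 (\<lambda>i. p ! i \<in> z ` {int n..int M}) (length p - 1)"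

text \<open>The set L_M, with vectors (k_0,...,k_M) represented as functions on {0..M}.\<close>
definition frakL :: "nat \<Rightarrow> (nat \<Rightarrow> nat) \<Rightarrow> bool" where
  "frakL M k \<longleftrightarrow> k 0 = 1 \<and> (\<forall>n<M. k n = 0 \<longrightarrow> k (Suc n) = 0)"

definition ktilde :: "nat \<Rightarrow> (nat \<Rightarrow> nat) \<Rightarrow> nat \<Rightarrow> nat" where
  "ktilde M k n = (if n < M then k (Suc n) else 0)"

end

theory Submission
  imports Defs
begin

text \<open>
Reading the depths as the integers \<open>-1, 0, \<dots>, M\<close>, a scattering sequence is an excursion
\<open>-1, 0, \<dots>, 0, -1\<close> of a walk with steps \<open>\<plusminus>1\<close> staying in \<open>[0, M]\<close> in between.  Such
excursions are exactly the contour words of plane trees of height at most \<open>M\<close>, the node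
at depth \<open>n\<close> being visited at height \<open>n\<close>.  Under this bijection \<open>k\<^sub>n\<close> counts the up-crossings
into \<open>[n, M]\<close>, i.e. the nodes at depth \<open>n\<close>, and \<open>b\<^sub>n\<close> those followed by a further step up,
i.e. the inner nodes at depth \<open>n\<close>.  A plane forest is determined by the sequence of child
numbers of its roots together with the forest of their children, so the number of trees
with profile \<open>(k, b)\<close> factors over the levels: at level \<open>n\<close> the \<open>k\<^sub>n\<^sub>+\<^sub>1\<close> children are
distributed among \<open>k\<^sub>n\<close> nodes with exactly \<open>b\<^sub>n\<close> of them nonempty, in
\<open>binomial k\<^sub>n b\<^sub>n \<cdot> binomial (k\<^sub>n\<^sub>+\<^sub>1 - 1) (b\<^sub>n - 1)\<close> ways.
\<close>

section \<open>Weak compositions\<close>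

definition weak_compositions :: "nat \<Rightarrow> nat \<Rightarrow> nat \<Rightarrow> nat list set" where
  "weak_compositions c s b =
     {r. length r = c \<and> sum_list r = s \<and> length (filter (\<lambda>x. x \<noteq> 0) r) = b}"

definition num_compositions :: "nat \<Rightarrow> nat \<Rightarrow> nat" where
  "num_compositions s b =
     (if s = 0 then (if b = 0 then 1 else 0) else if b = 0 then 0 else (s - 1) choose (b - 1))"

lemma finite_weak_compositions: "finite (weak_compositions c s b)"
proof -
  have "weak_compositions c s b \<subseteq> {xs. set xs \<subseteq> {..s} \<and> length xs = c}"
    by (auto simp: weak_compositions_def intro: member_le_sum_list)
  then show ?thesis
    by (rule finite_subset) (simp add: finite_lists_length_eq)
qed

lemma weak_compositions_0: "weak_compositions 0 s b = (if s = 0 \<and> b = 0 then {[]} else {})"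
  by (auto simp: weak_compositions_def)

lemma weak_compositions_no_nonzero:
  "weak_compositions c s 0 = (if s = 0 then {replicate c 0} else {})"
proof -
  have "r \<in> weak_compositions c s 0 \<longleftrightarrow> s = 0 \<and> r = replicate c 0" for r
  proof
    assume "r \<in> weak_compositions c s 0"
    then have r: "length r = c" "sum_list r = s" "\<forall>x\<in>set r. x = 0"
      by (auto simp: weak_compositions_def filter_empty_conv)
    then have "r = replicate c 0"
      by (intro replicate_eqI) auto
    with r show "s = 0 \<and> r = replicate c 0"
      by auto
  qed (simp add: weak_compositions_def)
  then show ?thesis
    by auto
qed

lemma weak_compositions_Suc:
  "weak_compositions (Suc c) s (Suc b) =
     (#) 0 ` weak_compositions c s (Suc b) \<union> (\<Union>i<s. (#) (s - i) ` weak_compositions c i b)"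
proof (rule set_eqI, rule iffI)
  fix r
  assume "r \<in> weak_compositions (Suc c) s (Suc b)"
  then obtain x r' where r: "r = x # r'" and r': "length r' = c" "x + sum_list r' = s"
    "length (filter (\<lambda>x. x \<noteq> 0) (x # r')) = Suc b"
    by (cases r) (auto simp: weak_compositions_def)
  show "r \<in> (#) 0 ` weak_compositions c s (Suc b) \<union> (\<Union>i<s. (#) (s - i) ` weak_compositions c i b)"
  proof (cases "x = 0")
    case True
    with r' have "r' \<in> weak_compositions c s (Suc b)"
      by (simp add: weak_compositions_def)
    with r True show ?thesis
      by blast
  next
    case False
    with r' have "r' \<in> weak_compositions c (sum_list r') b" and "sum_list r' < s"
      by (simp_all add: weak_compositions_def)
    moreover have "r = (s - sum_list r') # r'"
      using r r' by simp
    ultimately show ?thesis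
      by blast
  qed
qed (auto simp: weak_compositions_def)

lemma card_weak_compositions_Suc:
  "card (weak_compositions (Suc c) s (Suc b)) =
     card (weak_compositions c s (Suc b)) + (\<Sum>i<s. card (weak_compositions c i b))"
proof -
  have "card (weak_compositions (Suc c) s (Suc b)) =
      card ((#) 0 ` weak_compositions c s (Suc b)) +
      card (\<Union>i<s. (#) (s - i) ` weak_compositions c i b)"
    unfolding weak_compositions_Suc
    by (rule card_Un_disjoint) (auto simp: finite_weak_compositions)
  also have "card (\<Union>i<s. (#) (s - i) ` weak_compositions c i b) =
      (\<Sum>i<s. card ((#) (s - i) ` weak_compositions c i b))"
    by (rule card_UN_disjoint) (auto simp: finite_weak_compositions)
  finally show ?thesis
    by (simp add: card_image)
qed

lemma sum_num_compositions: "(\<Sum>i<s. num_compositions i b) = num_compositions s (Suc b)"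
proof (induction s)
  case (Suc s)
  then show ?case
    by (cases s; cases b) (auto simp: num_compositions_def)
qed (simp add: num_compositions_def)

lemma card_weak_compositions:
  "card (weak_compositions c s b) = (c choose b) * num_compositions s b"
proof (induction c arbitrary: s b)
  case 0
  then show ?case
    by (cases b) (auto simp: weak_compositions_0 num_compositions_def)
next
  case (Suc c)
  show ?case
  proof (cases b)
    case 0
    then show ?thesis
      by (simp add: weak_compositions_no_nonzero num_compositions_def)
  next
    case (Suc b')
    have "card (weak_compositions (Suc c) s (Suc b')) =
        (c choose Suc b') * num_compositions s (Suc b') + (\<Sum>i<s. (c choose b') * num_compositions i b')"
      by (simp add: card_weak_compositions_Suc Suc.IH)
    also have "\<dots> = (Suc c choose Suc b') * num_compositions s (Suc b')"
      by (simp add: sum_distrib_left[symmetric] sum_num_compositions algebra_simps)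
    finally show ?thesis
      using Suc by simp
  qed
qed

section \<open>Plane forests and their level profiles\<close>

datatype tree = Node (children: "tree list")

definition next_level :: "tree list \<Rightarrow> tree list" where
  "next_level f = concat (map children f)"

fun level_size :: "tree list \<Rightarrow> nat \<Rightarrow> nat" where
  "level_size f 0 = length f"
| "level_size f (Suc n) = level_size (next_level f) n"

fun level_inner :: "tree list \<Rightarrow> nat \<Rightarrow> nat" where
  "level_inner f 0 = length (filter (\<lambda>t. children t \<noteq> []) f)"
| "level_inner f (Suc n) = level_inner (next_level f) n"

fun height_le :: "nat \<Rightarrow> tree \<Rightarrow> bool" where
  "height_le 0 t \<longleftrightarrow> children t = []"
| "height_le (Suc m) t \<longleftrightarrow> (\<forall>c\<in>set (children t). height_le m c)"

definition forests_with_profile :: "nat \<Rightarrow> (nat \<Rightarrow> nat) \<Rightarrow> (nat \<Rightarrow> nat) \<Rightarrow> tree list set" where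
  "forests_with_profile M k b =
     {f. (\<forall>t\<in>set f. height_le M t) \<and> (\<forall>n\<le>M. level_size f n = k n \<and> level_inner f n = b n)}"

lemma level_size_append: "level_size (f @ g) n = level_size f n + level_size g n"
  by (induction n arbitrary: f g) (auto simp: next_level_def)

lemma level_inner_append: "level_inner (f @ g) n = level_inner f n + level_inner g n"
  by (induction n arbitrary: f g) (auto simp: next_level_def)

lemma level_size_Nil [simp]: "level_size [] n = 0"
  by (induction n) (auto simp: next_level_def)

lemma level_inner_Nil [simp]: "level_inner [] n = 0"
  by (induction n) (auto simp: next_level_def)

lemma level_size_eq_sum_list: "level_size f n = (\<Sum>t\<leftarrow>f. level_size [t] n)"
proof (induction f)
  case (Cons t f)
  then show ?case
    using level_size_append[of "[t]" f n] by simp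
qed simp

lemma level_inner_eq_sum_list: "level_inner f n = (\<Sum>t\<leftarrow>f. level_inner [t] n)"
proof (induction f)
  case (Cons t f)
  then show ?case
    using level_inner_append[of "[t]" f n] by simp
qed simp

fun unconcat :: "nat list \<Rightarrow> 'a list \<Rightarrow> 'a list list" where
  "unconcat [] xs = []"
| "unconcat (r # rs) xs = take r xs # unconcat rs (drop r xs)"

lemma concat_unconcat: "sum_list rs = length xs \<Longrightarrow> concat (unconcat rs xs) = xs"
  by (induction rs arbitrary: xs) auto

lemma map_length_unconcat: "sum_list rs = length xs \<Longrightarrow> map length (unconcat rs xs) = rs"
  by (induction rs arbitrary: xs) (auto simp: min_def)

lemma unconcat_concat: "unconcat (map length xss) (concat xss) = xss"
  by (induction xss) auto

definition root_split :: "tree list \<Rightarrow> nat list \<times> tree list" where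
  "root_split f = (map (\<lambda>t. length (children t)) f, next_level f)"

lemma inj_root_split: "inj root_split"
proof (rule injI)
  fix f g
  assume "root_split f = root_split g"
  then have "map length (map children f) = map length (map children g)"
    and "concat (map children f) = concat (map children g)"
    by (simp_all add: root_split_def next_level_def comp_def)
  then have "map children f = map children g"
    by (metis unconcat_concat)
  then have "map Node (map children f) = map Node (map children g)"
    by simp
  then show "f = g"
    by (simp add: comp_def)
qed

lemma root_split_unconcat:
  "sum_list r = length g \<Longrightarrow> root_split (map Node (unconcat r g)) = (r, g)"
  using map_length_unconcat concat_unconcat
  by (fastforce simp: root_split_def next_level_def comp_def)

lemma root_child_counts_in_weak_compositions_iff:
  "map (\<lambda>t. length (children t)) f \<in> weak_compositions c s b \<longleftrightarrow>
     length f = c \<and> length (next_level f) = s \<and> length (filter (\<lambda>t. children t \<noteq> []) f) = b"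
  by (simp add: weak_compositions_def next_level_def length_concat filter_map comp_def)

lemma root_split_forests_with_profile_Suc:
  "root_split ` forests_with_profile (Suc m) k b =
     weak_compositions (k 0) (k 1) (b 0) \<times> forests_with_profile m (\<lambda>n. k (Suc n)) (\<lambda>n. b (Suc n))"
proof (rule set_eqI, rule iffI)
  fix x
  assume "x \<in> root_split ` forests_with_profile (Suc m) k b"
  then obtain f where x: "x = root_split f"
    and height: "\<forall>t\<in>set f. height_le (Suc m) t"
    and profile: "\<forall>n\<le>Suc m. level_size f n = k n \<and> level_inner f n = b n"
    by (auto simp: forests_with_profile_def)
  have "map (\<lambda>t. length (children t)) f \<in> weak_compositions (k 0) (k 1) (b 0)"
    using profile[rule_format, of 0] profile[rule_format, of 1]
    by (simp add: root_child_counts_in_weak_compositions_iff)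
  moreover have "next_level f \<in> forests_with_profile m (\<lambda>n. k (Suc n)) (\<lambda>n. b (Suc n))"
    using height profile by (auto simp: forests_with_profile_def next_level_def)
  ultimately show "x \<in> weak_compositions (k 0) (k 1) (b 0) \<times>
      forests_with_profile m (\<lambda>n. k (Suc n)) (\<lambda>n. b (Suc n))"
    by (simp add: x root_split_def)
next
  fix x
  assume "x \<in> weak_compositions (k 0) (k 1) (b 0) \<times>
      forests_with_profile m (\<lambda>n. k (Suc n)) (\<lambda>n. b (Suc n))"
  then obtain r g where x: "x = (r, g)" and r: "r \<in> weak_compositions (k 0) (k 1) (b 0)"
    and height: "\<forall>c\<in>set g. height_le m c"
    and profile: "\<forall>n\<le>m. level_size g n = k (Suc n) \<and> level_inner g n = b (Suc n)"
    by (auto simp: forests_with_profile_def)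
  have "sum_list r = length g"
    using r profile[rule_format, of 0] by (simp add: weak_compositions_def)
  then have split: "root_split (map Node (unconcat r g)) = (r, g)"
    by (rule root_split_unconcat)
  define f where "f = map Node (unconcat r g)"
  have r_eq: "r = map (\<lambda>t. length (children t)) f" and g_eq: "next_level f = g"
    using split by (simp_all add: f_def root_split_def)
  have "\<forall>t\<in>set f. height_le (Suc m) t"
    using height g_eq by (auto simp: next_level_def)
  moreover have "\<forall>n\<le>Suc m. level_size f n = k n \<and> level_inner f n = b n"
    using r profile g_eq
    by (simp add: All_less_Suc2 r_eq root_child_counts_in_weak_compositions_iff
        flip: less_Suc_eq_le)
  ultimately have "f \<in> forests_with_profile (Suc m) k b"
    by (simp add: forests_with_profile_def)
  then show "x \<in> root_split ` forests_with_profile (Suc m) k b"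
    using split x f_def by force
qed

lemma root_split_forests_with_profile_0:
  "root_split ` forests_with_profile 0 k b = weak_compositions (k 0) 0 (b 0) \<times> {[]}"
proof (rule set_eqI, rule iffI)
  fix x :: "nat list \<times> tree list"
  assume "x \<in> root_split ` forests_with_profile 0 k b"
  then obtain f where x: "x = root_split f" and leaves: "\<forall>t\<in>set f. children t = []"
    and profile: "level_size f 0 = k 0 \<and> level_inner f 0 = b 0"
    by (auto simp: forests_with_profile_def)
  have "next_level f = []"
    using leaves by (simp add: next_level_def)
  with leaves profile show "x \<in> weak_compositions (k 0) 0 (b 0) \<times> {[]}"
    by (simp add: x root_split_def root_child_counts_in_weak_compositions_iff filter_False)
next
  fix x :: "nat list \<times> tree list"
  assume "x \<in> weak_compositions (k 0) 0 (b 0) \<times> {[]}"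
  then obtain r where x: "x = (r, [])" and r: "r \<in> weak_compositions (k 0) 0 (b 0)"
    by blast
  then have split: "root_split (map Node (unconcat r [])) = (r, [])"
    by (intro root_split_unconcat) (simp add: weak_compositions_def)
  define f where "f = map Node (unconcat r [])"
  have "r = map (\<lambda>t. length (children t)) f" "next_level f = []"
    using split by (simp_all add: f_def root_split_def)
  then have "f \<in> forests_with_profile 0 k b"
    using r by (simp add: forests_with_profile_def root_child_counts_in_weak_compositions_iff)
      (simp add: next_level_def)
  then show "x \<in> root_split ` forests_with_profile 0 k b"
    using split x f_def by force
qed

lemma card_forests_with_profile:
  "finite (forests_with_profile M k b) \<and>
   card (forests_with_profile M k b) =
     (\<Prod>n\<le>M. card (weak_compositions (k n) (ktilde M k n) (b n)))"
proof (induction M arbitrary: k b)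
  case 0
  have "finite (root_split ` forests_with_profile 0 k b)"
    unfolding root_split_forests_with_profile_0 by (simp add: finite_weak_compositions)
  moreover have "card (root_split ` forests_with_profile 0 k b) =
      card (weak_compositions (k 0) 0 (b 0))"
    unfolding root_split_forests_with_profile_0 by (simp add: card_cartesian_product)
  ultimately show ?case
    using inj_root_split by (simp add: finite_image_iff card_image inj_on_subset ktilde_def)
next
  case (Suc m)
  let ?k = "\<lambda>n. k (Suc n)" and ?b = "\<lambda>n. b (Suc n)"
  have "finite (root_split ` forests_with_profile (Suc m) k b)"
    unfolding root_split_forests_with_profile_Suc using Suc.IH by (simp add: finite_weak_compositions)
  moreover have "card (root_split ` forests_with_profile (Suc m) k b) =
      card (weak_compositions (k 0) (k 1) (b 0)) * card (forests_with_profile m ?k ?b)"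
    unfolding root_split_forests_with_profile_Suc by (simp add: card_cartesian_product)
  moreover have "\<dots> = (\<Prod>n\<le>Suc m. card (weak_compositions (k n) (ktilde (Suc m) k n) (b n)))"
    using Suc.IH by (simp add: prod.atMost_Suc_shift ktilde_def del: prod.atMost_Suc)
  ultimately show ?case
    using inj_root_split by (simp add: finite_image_iff card_image inj_on_subset)
qed

section \<open>Contours of plane trees\<close>

fun contour :: "int \<Rightarrow> tree \<Rightarrow> int list" where
  "contour h (Node ts) = h # concat (map (\<lambda>c. contour (h + 1) c @ [h]) ts)"

definition excursion :: "int \<Rightarrow> tree \<Rightarrow> int list" where
  "excursion h t = (h - 1) # contour h t @ [h - 1]"

definition unit_step :: "int \<Rightarrow> int \<Rightarrow> bool" where
  "unit_step x y \<longleftrightarrow> \<bar>x - y\<bar> = 1"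

lemma contour_ge: "x \<in> set (contour h t) \<Longrightarrow> h \<le> x"
proof (induction t arbitrary: h x)
  case (Node ts)
  then consider "x = h" | c where "c \<in> set ts" "x \<in> set (contour (h + 1) c)"
    by (auto split: if_splits)
  then show ?case
    by cases (use Node.IH in fastforce)+
qed

lemma contour_eq_Cons: "\<exists>W. contour h t = h # W"
  by (cases t) auto

lemma contour_ne_Nil [simp]: "contour h t \<noteq> []"
  by (cases t) simp

lemma hd_contour [simp]: "hd (contour h t) = h"
  by (cases t) simp

lemma last_contour [simp]: "last (contour h t) = h"
proof -
  have "ts \<noteq> [] \<Longrightarrow> last (concat (map (\<lambda>c. f c @ [h]) ts)) = h" for f and ts :: "tree list"
    by (induction ts) auto
  then show ?thesis
    by (cases t) auto
qed

lemma successively_contour: "successively unit_step (contour h t)"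
proof (induction t arbitrary: h)
  case (Node ts)
  have "successively unit_step (h # concat (map (\<lambda>c. contour (h + 1) c @ [h]) ts'))"
    if "set ts' \<subseteq> set ts" for ts'
    using that
  proof (induction ts')
    case (Cons c ts')
    obtain W where W: "contour (h + 1) c = (h + 1) # W"
      using contour_eq_Cons by blast
    have "successively unit_step (h # contour (h + 1) c)"
      using Node.IH[of c "h + 1"] Cons.prems W by (simp add: unit_step_def)
    moreover have "successively unit_step (h # concat (map (\<lambda>c. contour (h + 1) c @ [h]) ts'))"
      using Cons by simp
    ultimately have "successively unit_step
        ((h # contour (h + 1) c) @ (h # concat (map (\<lambda>c. contour (h + 1) c @ [h]) ts')))"
      by (subst successively_append_iff) (simp add: unit_step_def)
    then show ?case
      by simp
  qed simp
  then show ?case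
    by simp
qed

lemma height_le_iff_contour_le: "height_le M t \<longleftrightarrow> (\<forall>x\<in>set (contour h t). x \<le> h + int M)"
proof (induction t arbitrary: h M)
  case (Node ts)
  show ?case
  proof (cases M)
    case 0
    have "(\<forall>x\<in>set (contour h (Node ts)). x \<le> h) \<longleftrightarrow> ts = []"
    proof
      assume below: "\<forall>x\<in>set (contour h (Node ts)). x \<le> h"
      show "ts = []"
      proof (rule ccontr)
        assume "ts \<noteq> []"
        then obtain c where "c \<in> set ts"
          by (cases ts) auto
        then have "h + 1 \<in> set (contour h (Node ts))"
          using contour_eq_Cons[of "h + 1" c] by force
        with below show False
          by fastforce
      qed
    qed simp
    with 0 show ?thesis
      by simp
  next
    case (Suc m)
    with Node.IH have "height_le M (Node ts) \<longleftrightarrow>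
        (\<forall>c\<in>set ts. \<forall>x\<in>set (contour (h + 1) c). x \<le> h + 1 + int m)"
      by simp
    with Suc show ?thesis
      by (auto simp: add.assoc)
  qed
qed

lemma append_Cons_eq_append_Cons_iff:
  assumes "x \<notin> set xs" "x \<notin> set xs'"
  shows "xs @ x # ys = xs' @ x # ys' \<longleftrightarrow> xs = xs' \<and> ys = ys'"
proof
  assume eq: "xs @ x # ys = xs' @ x # ys'"
  have "takeWhile (\<lambda>y. y \<noteq> x) (xs @ x # ys) = xs"
    "takeWhile (\<lambda>y. y \<noteq> x) (xs' @ x # ys') = xs'"
    using assms by (auto simp: takeWhile_tail takeWhile_eq_all_conv)
  with eq show "xs = xs' \<and> ys = ys'"
    by simp
qed simp

lemma contour_inject: "contour h t = contour h t' \<Longrightarrow> t = t'"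
proof (induction t arbitrary: h t')
  case (Node ts)
  obtain ts' where t': "t' = Node ts'"
    by (cases t')
  have "concat (map (\<lambda>c. contour (h + 1) c @ [h]) ts) =
        concat (map (\<lambda>c. contour (h + 1) c @ [h]) ts')"
    using Node.prems t' by simp
  then have "ts = ts'"
    using Node.IH
  proof (induction ts arbitrary: ts')
    case Nil
    then show ?case
      by (cases ts') auto
  next
    case (Cons c ts)
    then obtain c' ts'' where ts': "ts' = c' # ts''"
      by (cases ts') auto
    have "h \<notin> set (contour (h + 1) c)" "h \<notin> set (contour (h + 1) c')"
      using contour_ge by fastforce+
    moreover have "contour (h + 1) c @ h # concat (map (\<lambda>c. contour (h + 1) c @ [h]) ts) =
        contour (h + 1) c' @ h # concat (map (\<lambda>c. contour (h + 1) c @ [h]) ts'')"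
      using Cons.prems(1) ts' by simp
    ultimately have "contour (h + 1) c = contour (h + 1) c' \<and>
        concat (map (\<lambda>c. contour (h + 1) c @ [h]) ts) =
        concat (map (\<lambda>c. contour (h + 1) c @ [h]) ts'')"
      by (simp add: append_Cons_eq_append_Cons_iff)
    then have "contour (h + 1) c = contour (h + 1) c'"
      and rest: "concat (map (\<lambda>c. contour (h + 1) c @ [h]) ts) =
                 concat (map (\<lambda>c. contour (h + 1) c @ [h]) ts'')"
      by simp_all
    then show ?case
      using Cons.IH[OF rest] Cons.prems(2) ts' by simp
  qed
  with t' show ?case
    by simp
qed

lemma first_return_decomposition:
  fixes h :: int
  assumes steps: "successively unit_step (h # rest)"
    and above: "\<forall>x\<in>set rest. h \<le> x" and returns: "h \<in> set rest"
  obtains E R where "rest = E @ h # R" "E \<noteq> []" "hd E = h + 1" "last E = h + 1"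
    "\<forall>x\<in>set E. h + 1 \<le> x" "successively unit_step E" "successively unit_step (h # R)"
proof -
  define E where "E = takeWhile (\<lambda>x. x \<noteq> h) rest"
  have "dropWhile (\<lambda>x. x \<noteq> h) rest \<noteq> []"
    using returns by (simp add: dropWhile_eq_Nil_conv)
  moreover from this have "hd (dropWhile (\<lambda>x. x \<noteq> h) rest) = h"
    using hd_dropWhile by blast
  ultimately obtain R where "dropWhile (\<lambda>x. x \<noteq> h) rest = h # R"
    by (cases "dropWhile (\<lambda>x. x \<noteq> h) rest") auto
  then have rest: "rest = E @ h # R"
    unfolding E_def by (metis takeWhile_dropWhile_id)
  have "rest \<noteq> []"
    using returns by auto
  then have "hd rest = h + 1"
    using steps above by (cases rest) (auto simp: unit_step_def)
  then have E_ne: "E \<noteq> []" and hd_E: "hd E = h + 1"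
    using rest by (cases E; simp)+
  have E_above: "\<forall>x\<in>set E. h + 1 \<le> x"
  proof
    fix x
    assume "x \<in> set E"
    then have "x \<noteq> h" and "x \<in> set rest"
      unfolding E_def by (auto dest: set_takeWhileD)
    with above show "h + 1 \<le> x"
      by fastforce
  qed
  have "successively unit_step ((h # E) @ h # R)"
    using steps rest by simp
  then have steps_E: "successively unit_step E" and last_step: "unit_step (last E) h"
    and steps_R: "successively unit_step (h # R)"
    using E_ne by (auto simp: successively_append_iff successively_Cons)
  have "last E = h + 1"
    using last_step E_above last_in_set[OF E_ne] by (fastforce simp: unit_step_def)
  with that rest E_ne hd_E E_above steps_E steps_R show ?thesis
    by blast
qed

lemma contour_surj:
  fixes h :: int
  assumes "ys \<noteq> []" "hd ys = h" "last ys = h" "\<forall>x\<in>set ys. h \<le> x" "successively unit_step ys"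
  shows "\<exists>t. ys = contour h t"
  using assms
proof (induction "length ys" arbitrary: ys h rule: less_induct)
  case less
  obtain rest where ys: "ys = h # rest"
    using less.prems(1,2) by (cases ys) auto
  show ?case
  proof (cases "rest = []")
    case True
    with ys show ?thesis
      by (intro exI[of _ "Node []"]) simp
  next
    case False
    have "successively unit_step (h # rest)" "\<forall>x\<in>set rest. h \<le> x"
      using less.prems(4,5) ys by simp_all
    moreover have "h \<in> set rest"
      using less.prems(3) ys False last_in_set[of rest] by simp
    ultimately obtain E R where split: "rest = E @ h # R" and "E \<noteq> []"
      "hd E = h + 1" "last E = h + 1" "\<forall>x\<in>set E. h + 1 \<le> x" "successively unit_step E"
      and steps_R: "successively unit_step (h # R)"
      by (rule first_return_decomposition)
    moreover have "length E < length ys"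
      using ys split by simp
    ultimately obtain c where c: "E = contour (h + 1) c"
      using less.hyps[of E "h + 1"] by blast
    have "length (h # R) < length ys" "last (h # R) = h" "\<forall>x\<in>set (h # R). h \<le> x"
      using less.prems(3,4) ys split by simp_all
    then obtain t where "h # R = contour h t"
      using less.hyps[of "h # R" h] steps_R by auto
    moreover obtain ts where "t = Node ts"
      by (cases t)
    ultimately have "ys = contour h (Node (c # ts))"
      using ys split c by simp
    then show ?thesis
      by blast
  qed
qed

lemma successively_excursion: "successively unit_step (excursion h t)"
proof -
  have "successively unit_step (contour h t @ [h - 1])"
    using successively_contour[of h t] by (simp add: successively_append_iff unit_step_def)
  then show ?thesis
    by (simp add: excursion_def successively_Cons unit_step_def)
qed

section \<open>Up-crossings of an excursion\<close>

fun up_crossings :: "int \<Rightarrow> int list \<Rightarrow> nat" where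
  "up_crossings n (x # y # r) = (if x < n \<and> n \<le> y then 1 else 0) + up_crossings n (y # r)"
| "up_crossings n _ = 0"

fun long_up_crossings :: "int \<Rightarrow> int list \<Rightarrow> nat" where
  "long_up_crossings n (x # y # w # r) =
     (if x < n \<and> n \<le> y \<and> n \<le> w then 1 else 0) + long_up_crossings n (y # w # r)"
| "long_up_crossings n _ = 0"

lemma up_crossings_append:
  "up_crossings n (xs @ y # ys) = up_crossings n (xs @ [y]) + up_crossings n (y # ys)"
proof (induction xs)
  case (Cons x xs)
  then show ?case
    by (cases xs) auto
qed simp

lemma long_up_crossings_append:
  "long_up_crossings n (xs @ y # ys) = long_up_crossings n (xs @ [y]) + long_up_crossings n (y # ys) +
     (if xs \<noteq> [] \<and> ys \<noteq> [] \<and> last xs < n \<and> n \<le> y \<and> n \<le> hd ys then 1 else 0)"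
proof (induction xs)
  case (Cons x xs)
  show ?case
  proof (cases xs)
    case Nil
    then show ?thesis
      by (cases ys) auto
  next
    case (Cons x' xs')
    then show ?thesis
      using Cons.IH by (cases xs') auto
  qed
qed simp

lemma up_crossings_above: "\<forall>x\<in>set xs. n \<le> x \<Longrightarrow> up_crossings n (xs @ [y]) = 0"
proof (induction xs)
  case (Cons x xs)
  then show ?case
    by (cases xs) auto
qed simp

lemma long_up_crossings_above: "\<forall>x\<in>set xs. n \<le> x \<Longrightarrow> long_up_crossings n (xs @ [y]) = 0"
proof (induction xs)
  case (Cons x xs)
  show ?case
  proof (cases xs)
    case (Cons x' xs')
    then show ?thesis
      using Cons.IH Cons.prems by (cases xs') auto
  qed simp
qed simp

lemma up_crossings_children:
  assumes "h < n" "y < n"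
  shows "up_crossings n (h # concat (map (\<lambda>c. contour (h + 1) c @ [h]) ts) @ [y]) =
    (\<Sum>c\<leftarrow>ts. up_crossings n (excursion (h + 1) c))"
proof (induction ts)
  case (Cons c ts)
  have "up_crossings n ((h # contour (h + 1) c) @ h # concat (map (\<lambda>c. contour (h + 1) c @ [h]) ts) @ [y]) =
      up_crossings n ((h # contour (h + 1) c) @ [h]) +
      up_crossings n (h # concat (map (\<lambda>c. contour (h + 1) c @ [h]) ts) @ [y])"
    by (rule up_crossings_append)
  with Cons show ?case
    by (simp add: excursion_def)
qed (use assms in simp)

lemma long_up_crossings_children:
  assumes "h < n" "y < n"
  shows "long_up_crossings n (h # concat (map (\<lambda>c. contour (h + 1) c @ [h]) ts) @ [y]) =
    (\<Sum>c\<leftarrow>ts. long_up_crossings n (excursion (h + 1) c))"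
proof (induction ts)
  case (Cons c ts)
  have "long_up_crossings n ((h # contour (h + 1) c) @ h # concat (map (\<lambda>c. contour (h + 1) c @ [h]) ts) @ [y]) =
      long_up_crossings n ((h # contour (h + 1) c) @ [h]) +
      long_up_crossings n (h # concat (map (\<lambda>c. contour (h + 1) c @ [h]) ts) @ [y])"
    by (subst long_up_crossings_append) (use assms in simp)
  with Cons show ?case
    by (simp add: excursion_def)
qed (use assms in simp)

lemma up_crossings_excursion_root:
  "up_crossings h (excursion h t) = 1 \<and>
   long_up_crossings h (excursion h t) = (if children t = [] then 0 else 1)"
proof (cases t)
  case (Node ts)
  let ?W = "concat (map (\<lambda>c. contour (h + 1) c @ [h]) ts)"
  have above: "\<forall>x\<in>set (h # ?W). h \<le> x"
    using contour_ge[of _ h "Node ts"] by simp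
  have exc: "excursion h (Node ts) = (h - 1) # h # (?W @ [h - 1])"
    by (simp add: excursion_def)
  have "up_crossings h (excursion h (Node ts)) = 1"
    unfolding exc using up_crossings_above[OF above, of "h - 1"] by simp
  moreover have "long_up_crossings h (excursion h (Node ts)) = (if ts = [] then 0 else 1)"
  proof (cases ts)
    case (Cons c ts')
    obtain V where "contour (h + 1) c = (h + 1) # V"
      using contour_eq_Cons by blast
    with Cons have "?W @ [h - 1] = (h + 1) # V @ [h] @ concat (map (\<lambda>c. contour (h + 1) c @ [h]) ts') @ [h - 1]"
      by simp
    then have "long_up_crossings h (excursion h (Node ts)) = 1 + long_up_crossings h (h # ?W @ [h - 1])"
      unfolding exc by simp
    with Cons show ?thesis
      using long_up_crossings_above[OF above, of "h - 1"] by simp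
  qed (simp add: excursion_def)
  ultimately show ?thesis
    using Node by simp
qed

lemma up_crossings_excursion:
  "up_crossings (h + int d) (excursion h t) = level_size [t] d \<and>
   long_up_crossings (h + int d) (excursion h t) = level_inner [t] d"
proof (induction t arbitrary: h d)
  case (Node ts)
  show ?case
  proof (cases d)
    case 0
    then show ?thesis
      using up_crossings_excursion_root[of h "Node ts"] by (simp add: filter_empty_conv)
  next
    case (Suc d')
    let ?W = "concat (map (\<lambda>c. contour (h + 1) c @ [h]) ts)"
    have level: "h + int d = (h + 1) + int d'"
      using Suc by simp
    have below: "h < h + int d" "h - 1 < h + int d"
      using Suc by simp_all
    have exc: "excursion h (Node ts) = (h - 1) # (h # ?W @ [h - 1])"
      by (simp add: excursion_def)
    have "up_crossings (h + int d) (excursion h (Node ts)) =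
        up_crossings (h + int d) (h # ?W @ [h - 1])"
      unfolding exc using below by simp
    also have "\<dots> = (\<Sum>c\<leftarrow>ts. up_crossings (h + int d) (excursion (h + 1) c))"
      by (rule up_crossings_children[OF below])
    also have "\<dots> = (\<Sum>c\<leftarrow>ts. level_size [c] d')"
      using Node.IH level by (metis (no_types, lifting) map_eq_conv)
    also have "\<dots> = level_size [Node ts] d"
      using Suc level_size_eq_sum_list[of ts d'] by (simp add: next_level_def)
    finally have up: "up_crossings (h + int d) (excursion h (Node ts)) = level_size [Node ts] d" .
    have "long_up_crossings (h + int d) (excursion h (Node ts)) =
        long_up_crossings (h + int d) (h # ?W @ [h - 1])"
      unfolding exc using below by (cases "?W @ [h - 1]") simp_all
    also have "\<dots> = (\<Sum>c\<leftarrow>ts. long_up_crossings (h + int d) (excursion (h + 1) c))"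
      by (rule long_up_crossings_children[OF below])
    also have "\<dots> = (\<Sum>c\<leftarrow>ts. level_inner [c] d')"
      using Node.IH level by (metis (no_types, lifting) map_eq_conv)
    also have "\<dots> = level_inner [Node ts] d"
      using Suc level_inner_eq_sum_list[of ts d'] by (simp add: next_level_def)
    finally show ?thesis
      using up by simp
  qed
qed

lemma card_Collect_nat_Suc:
  assumes "finite {i. P (Suc i)}"
  shows "card {i. P i} = (if P 0 then 1 else 0) + card {i. P (Suc i)}"
proof -
  have "{i. P i} = (if P 0 then {0} else {}) \<union> Suc ` {i. P (Suc i)}"
    by (auto simp: image_iff) (metis not0_implies_Suc)+
  then show ?thesis
    using assms by (simp add: card_image)
qed

lemma up_crossings_eq_card:
  "up_crossings n xs = card {i. Suc i < length xs \<and> xs ! i < n \<and> n \<le> xs ! Suc i}"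
proof (induction n xs rule: up_crossings.induct)
  case (1 n x y r)
  have "finite {i. Suc (Suc i) < length (x # y # r)}"
    by simp
  then show ?case
    using 1 by (subst card_Collect_nat_Suc) (auto intro: finite_subset)
qed auto

lemma long_up_crossings_eq_card:
  "long_up_crossings n xs =
     card {i. Suc (Suc i) < length xs \<and> xs ! i < n \<and> n \<le> xs ! Suc i \<and> n \<le> xs ! Suc (Suc i)}"
proof (induction n xs rule: long_up_crossings.induct)
  case (1 n x y w r)
  have "finite {i. Suc (Suc (Suc i)) < length (x # y # w # r)}"
    by simp
  then show ?case
    using 1 by (subst card_Collect_nat_Suc) (auto intro: finite_subset)
qed auto

section \<open>Maximal runs\<close>

definition run_end :: "(nat \<Rightarrow> bool) \<Rightarrow> nat \<Rightarrow> nat \<Rightarrow> nat" where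
  "run_end P L a = (LEAST b. a \<le> b \<and> (b = L \<or> \<not> P (Suc b)))"

lemma run_end_le: "a \<le> L \<Longrightarrow> run_end P L a \<le> L"
  unfolding run_end_def by (rule Least_le) simp

lemma run_end_maximal:
  assumes "a \<le> L"
  shows "a \<le> run_end P L a" "run_end P L a = L \<or> \<not> P (Suc (run_end P L a))"
proof -
  have "a \<le> run_end P L a \<and> (run_end P L a = L \<or> \<not> P (Suc (run_end P L a)))"
    unfolding run_end_def by (rule LeastI[of _ L]) (simp add: assms)
  then show "a \<le> run_end P L a" "run_end P L a = L \<or> \<not> P (Suc (run_end P L a))"
    by simp_all
qed

lemma run_end_run:
  assumes "a \<le> L" "P a" "i \<in> {a..run_end P L a}"
  shows "P i"
proof (rule ccontr)
  assume "\<not> P i"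
  with assms obtain j where j: "i = Suc j" "a \<le> j" "j < run_end P L a"
    by (cases i) (auto simp: le_Suc_eq)
  with \<open>\<not> P i\<close> have "run_end P L a \<le> j"
    unfolding run_end_def by (intro Least_le) simp
  with j show False
    by simp
qed

lemma run_end_unique:
  assumes "a \<le> b" "b \<le> L" "\<forall>i\<in>{a..b}. P i" "b = L \<or> \<not> P (Suc b)"
  shows "run_end P L a = b"
proof (rule antisym)
  show "run_end P L a \<le> b"
    unfolding run_end_def using assms by (intro Least_le) simp
  show "b \<le> run_end P L a"
  proof (rule ccontr)
    assume "\<not> b \<le> run_end P L a"
    moreover have "a \<le> run_end P L a" "run_end P L a = L \<or> \<not> P (Suc (run_end P L a))"
      using run_end_maximal assms by (meson order.trans)+
    ultimately show False
      using assms by force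
  qed
qed

text \<open>A maximal run is determined by its first index.\<close>

lemma runs_count_eq_card_run_starts:
  "runs_count m P L =
     card {a. a \<le> L \<and> P a \<and> (a = 0 \<or> \<not> P (a - 1)) \<and> m \<le> run_end P L a - a + 1}"
proof -
  let ?starts = "{a. a \<le> L \<and> P a \<and> (a = 0 \<or> \<not> P (a - 1)) \<and> m \<le> run_end P L a - a + 1}"
  have "{(a, b). a \<le> b \<and> b \<le> L \<and> b - a + 1 \<ge> m \<and> (\<forall>i\<in>{a..b}. P i) \<and>
      (a = 0 \<or> \<not> P (a - 1)) \<and> (b = L \<or> \<not> P (Suc b))} = (\<lambda>a. (a, run_end P L a)) ` ?starts"
  proof (rule set_eqI, rule iffI)
    fix x
    assume "x \<in> {(a, b). a \<le> b \<and> b \<le> L \<and> b - a + 1 \<ge> m \<and> (\<forall>i\<in>{a..b}. P i) \<and>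
      (a = 0 \<or> \<not> P (a - 1)) \<and> (b = L \<or> \<not> P (Suc b))}"
    then obtain a b where "x = (a, b)" "a \<le> b" "b \<le> L" "b - a + 1 \<ge> m" "\<forall>i\<in>{a..b}. P i"
      "a = 0 \<or> \<not> P (a - 1)" "b = L \<or> \<not> P (Suc b)"
      by blast
    moreover from this have "run_end P L a = b"
      by (intro run_end_unique)
    ultimately show "x \<in> (\<lambda>a. (a, run_end P L a)) ` ?starts"
      by auto
  next
    fix x
    assume "x \<in> (\<lambda>a. (a, run_end P L a)) ` ?starts"
    then obtain a where "x = (a, run_end P L a)" "a \<in> ?starts"
      by blast
    then show "x \<in> {(a, b). a \<le> b \<and> b \<le> L \<and> b - a + 1 \<ge> m \<and> (\<forall>i\<in>{a..b}. P i) \<and>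
      (a = 0 \<or> \<not> P (a - 1)) \<and> (b = L \<or> \<not> P (Suc b))}"
      using run_end_le[of a L P] run_end_maximal[of a L P] run_end_run[of a L P] by auto
  qed
  then show ?thesis
    unfolding runs_count_def by (simp add: card_image inj_on_def)
qed

lemma runs_count_1_eq_card_up_steps:
  assumes "\<not> P 0"
  shows "runs_count 1 P L = card {i. i < L \<and> \<not> P i \<and> P (Suc i)}"
proof -
  have "{a. a \<le> L \<and> P a \<and> (a = 0 \<or> \<not> P (a - 1))} = Suc ` {i. i < L \<and> \<not> P i \<and> P (Suc i)}"
  proof (rule set_eqI)
    fix a
    show "a \<in> {a. a \<le> L \<and> P a \<and> (a = 0 \<or> \<not> P (a - 1))} \<longleftrightarrow>
        a \<in> Suc ` {i. i < L \<and> \<not> P i \<and> P (Suc i)}"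
      using assms by (cases a) auto
  qed
  then show ?thesis
    by (simp add: runs_count_eq_card_run_starts card_image)
qed

lemma runs_count_2_eq_card_up_steps:
  assumes "\<not> P 0"
  shows "runs_count 2 P L = card {i. Suc i < L \<and> \<not> P i \<and> P (Suc i) \<and> P (Suc (Suc i))}"
proof -
  have long: "2 \<le> run_end P L a - a + 1 \<longleftrightarrow> a < L \<and> P (Suc a)" if "a \<le> L" "P a" for a
  proof -
    have "run_end P L a \<noteq> a \<longleftrightarrow> a < L \<and> P (Suc a)"
    proof
      assume "run_end P L a \<noteq> a"
      moreover have "\<not> (a < L \<and> P (Suc a)) \<Longrightarrow> run_end P L a \<le> a"
        unfolding run_end_def using \<open>a \<le> L\<close> by (intro Least_le) auto
      ultimately show "a < L \<and> P (Suc a)"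
        using run_end_maximal(1)[OF \<open>a \<le> L\<close>, of P] by fastforce
    qed (use run_end_maximal(2)[OF \<open>a \<le> L\<close>, of P] in auto)
    then show ?thesis
      using run_end_maximal(1)[OF \<open>a \<le> L\<close>, of P] by auto
  qed
  have "{a. a \<le> L \<and> P a \<and> (a = 0 \<or> \<not> P (a - 1)) \<and> 2 \<le> run_end P L a - a + 1} =
      Suc ` {i. Suc i < L \<and> \<not> P i \<and> P (Suc i) \<and> P (Suc (Suc i))}"
  proof (rule set_eqI)
    fix a
    show "a \<in> {a. a \<le> L \<and> P a \<and> (a = 0 \<or> \<not> P (a - 1)) \<and> 2 \<le> run_end P L a - a + 1} \<longleftrightarrow>
        a \<in> Suc ` {i. Suc i < L \<and> \<not> P i \<and> P (Suc i) \<and> P (Suc (Suc i))}"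
      using assms long[of a] by (cases a) auto
  qed
  then show ?thesis
    by (simp add: runs_count_eq_card_run_starts card_image)
qed

section \<open>Scattering sequences as excursions\<close>

definition excursion_words :: "nat \<Rightarrow> int list set" where
  "excursion_words M = {(-1) # ys @ [-1] | ys.
     ys \<noteq> [] \<and> set ys \<subseteq> {0..int M} \<and> successively unit_step ((-1) # ys @ [-1])}"

lemma excursion_words_eq_image: "excursion_words M = excursion 0 ` {t. height_le M t}"
proof (rule set_eqI, rule iffI)
  fix xs
  assume "xs \<in> excursion_words M"
  then obtain ys where xs: "xs = (-1) # ys @ [-1]" and "ys \<noteq> []" and range: "set ys \<subseteq> {0..int M}"
    and steps: "successively unit_step ((-1) # ys @ [-1])"
    unfolding excursion_words_def by blast
  then have steps_ys: "successively unit_step ys"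
    and "unit_step (-1) (hd ys)" "unit_step (last ys) (-1)"
    by (simp_all add: successively_Cons successively_append_iff)
  moreover have "hd ys \<in> set ys" "last ys \<in> set ys"
    using \<open>ys \<noteq> []\<close> by simp_all
  ultimately have "hd ys = 0" "last ys = 0"
    using range by (fastforce simp: unit_step_def)+
  moreover have "\<forall>x\<in>set ys. 0 \<le> x"
    using range by auto
  ultimately obtain t where t: "ys = contour 0 t"
    using contour_surj[of ys 0] \<open>ys \<noteq> []\<close> steps_ys by blast
  then have "height_le M t"
    using range height_le_iff_contour_le[of M t 0] by auto
  with xs t show "xs \<in> excursion 0 ` {t. height_le M t}"
    by (auto simp: excursion_def)
next
  fix xs
  assume "xs \<in> excursion 0 ` {t. height_le M t}"
  then obtain t where "xs = excursion 0 t" "height_le M t"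
    by blast
  moreover from this have "set (contour 0 t) \<subseteq> {0..int M}"
    using contour_ge[of _ 0 t] height_le_iff_contour_le[of M t 0] by auto
  ultimately show "xs \<in> excursion_words M"
    using successively_excursion[of 0 t]
    unfolding excursion_words_def excursion_def by auto
qed

lemma excursion_words_conv_nth:
  "xs \<in> excursion_words M \<longleftrightarrow>
    (\<exists>L. length xs = Suc L \<and> 2 \<le> L \<and> xs ! 0 = -1 \<and> xs ! L = -1 \<and>
      (\<forall>i. 1 \<le> i \<and> i \<le> L - 1 \<longrightarrow> xs ! i \<in> {0..int M}) \<and>
      (\<forall>i<L. unit_step (xs ! i) (xs ! Suc i)))"
  (is "_ \<longleftrightarrow> (\<exists>L. ?nth L)")
proof
  assume "xs \<in> excursion_words M"
  then obtain ys where xs: "xs = (-1) # ys @ [-1]" and "ys \<noteq> []" and range: "set ys \<subseteq> {0..int M}"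
    and steps: "successively unit_step xs"
    unfolding excursion_words_def by blast
  have "?nth (Suc (length ys))"
  proof (intro conjI allI impI)
    fix i
    assume "1 \<le> i \<and> i \<le> Suc (length ys) - 1"
    then have xs_i: "xs ! i = ys ! (i - 1)" and "i - 1 < length ys"
      using xs by (auto simp: nth_Cons' nth_append)
    then have "ys ! (i - 1) \<in> set ys"
      by simp
    with range xs_i show "xs ! i \<in> {0..int M}"
      by auto
  next
    fix i
    assume "i < Suc (length ys)"
    with xs show "unit_step (xs ! i) (xs ! Suc i)"
      using successively_nth[OF steps, of i] by simp
  qed (use xs \<open>ys \<noteq> []\<close> in \<open>simp_all add: nth_append Suc_le_eq\<close>)
  then show "\<exists>L. ?nth L" ..
next
  assume "\<exists>L. ?nth L"
  then obtain L where L: "?nth L" ..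
  define ys where "ys = butlast (tl xs)"
  have "xs \<noteq> []" "tl xs \<noteq> []"
    using L by (cases xs; auto)+
  then have "xs = hd xs # ys @ [last xs]"
    by (cases xs) (auto simp: ys_def)
  moreover have "hd xs = -1" "last xs = -1"
    using L \<open>xs \<noteq> []\<close> by (simp_all add: hd_conv_nth last_conv_nth)
  ultimately have xs: "xs = (-1) # ys @ [-1]"
    by simp
  then have ys_nth: "ys ! j = xs ! Suc j" if "j < length ys" for j
    using that by (simp add: nth_append)
  have "length ys = L - 1"
    using L xs by (metis diff_Suc_1 length_Cons length_append_singleton)
  then have "ys \<noteq> []" and "set ys \<subseteq> {0..int M}"
    using L ys_nth by (auto simp: in_set_conv_nth)
  moreover have "successively unit_step xs"
    using L by (simp add: successively_conv_nth)
  ultimately show "xs \<in> excursion_words M"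
    unfolding excursion_words_def using xs by auto
qed

lemma doubleton_eq_consecutive_iff_unit_step:
  fixes z :: "int \<Rightarrow> real"
  assumes inj: "inj_on z {-1..int M}" and x: "x \<in> {-1..int M}" and y: "y \<in> {-1..int M}"
  shows "(\<exists>j\<in>{-1..int M - 1}. {z x, z y} = {z j, z (j + 1)}) \<longleftrightarrow> unit_step x y"
proof
  assume "\<exists>j\<in>{-1..int M - 1}. {z x, z y} = {z j, z (j + 1)}"
  then obtain j where j: "j \<in> {-1..int M - 1}" "{z x, z y} = {z j, z (j + 1)}"
    by blast
  then have "(z x = z j \<and> z y = z (j + 1)) \<or> (z x = z (j + 1) \<and> z y = z j)"
    by (simp add: doubleton_eq_iff)
  moreover have "j \<in> {-1..int M}" "j + 1 \<in> {-1..int M}"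
    using j(1) by simp_all
  ultimately have "(x = j \<and> y = j + 1) \<or> (x = j + 1 \<and> y = j)"
    using inj x y by (auto dest: inj_onD)
  then show "unit_step x y"
    by (auto simp: unit_step_def)
next
  assume "unit_step x y"
  then consider "y = x + 1" | "x = y + 1"
    unfolding unit_step_def by arith
  then show "\<exists>j\<in>{-1..int M - 1}. {z x, z y} = {z j, z (j + 1)}"
  proof cases
    case 1
    with x y show ?thesis
      by (intro bexI[of _ x]) auto
  next
    case 2
    with x y show ?thesis
      by (intro bexI[of _ y]) auto
  qed
qed

lemma scat_seqs_subset_map_excursion_words:
  fixes z :: "int \<Rightarrow> real"
  assumes inj: "inj_on z {-1..int M}"
  shows "scat_seqs z M \<subseteq> map z ` excursion_words M"
proof
  fix p
  assume "p \<in> scat_seqs z M"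
  then obtain L where L: "length p = Suc L" "L \<ge> 2" "p ! 0 = z (-1)" "p ! L = z (-1)"
    "\<forall>i. 1 \<le> i \<and> i \<le> L - 1 \<longrightarrow> p ! i \<in> z ` {0..int M}"
    "\<forall>i<L. \<exists>j\<in>{-1..int M - 1}. {p ! i, p ! Suc i} = {z j, z (j + 1)}"
    unfolding scat_seqs_def by blast
  define xs where "xs = map (inv_into {-1..int M} z) p"
  have xs_eq: "xs ! i = w" if "i \<le> L" "p ! i = z w" "w \<in> {-1..int M}" for i w
    using L that by (simp add: xs_def inv_into_f_f[OF inj])
  have p_i: "p ! i = z (xs ! i)" "xs ! i \<in> {-1..int M}" if "i \<le> L" for i
  proof -
    have "p ! i \<in> z ` {-1..int M}"
    proof (cases "i = 0 \<or> i = L")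
      case False
      with that have "1 \<le> i \<and> i \<le> L - 1"
        by auto
      with L(5) have "p ! i \<in> z ` {0..int M}"
        by blast
      then show ?thesis
        by auto
    qed (use L in auto)
    with xs_eq[OF that] show "p ! i = z (xs ! i)" "xs ! i \<in> {-1..int M}"
      by auto
  qed
  have "length xs = Suc L \<and> 2 \<le> L \<and> xs ! 0 = -1 \<and> xs ! L = -1 \<and>
      (\<forall>i. 1 \<le> i \<and> i \<le> L - 1 \<longrightarrow> xs ! i \<in> {0..int M}) \<and>
      (\<forall>i<L. unit_step (xs ! i) (xs ! Suc i))"
  proof (intro conjI allI impI)
    fix i
    assume i: "1 \<le> i \<and> i \<le> L - 1"
    with L obtain w where "w \<in> {0..int M}" "p ! i = z w"
      by blast
    with i show "xs ! i \<in> {0..int M}"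
      using xs_eq[of i w] by auto
  next
    fix i
    assume "i < L"
    then have "\<exists>j\<in>{-1..int M - 1}. {p ! i, p ! Suc i} = {z j, z (j + 1)}"
      using L(6) by blast
    moreover have "p ! i = z (xs ! i)" "p ! Suc i = z (xs ! Suc i)"
      "xs ! i \<in> {-1..int M}" "xs ! Suc i \<in> {-1..int M}"
      using p_i \<open>i < L\<close> by simp_all
    ultimately show "unit_step (xs ! i) (xs ! Suc i)"
      using doubleton_eq_consecutive_iff_unit_step[OF inj] by simp
  qed (use L xs_eq[of 0 "-1"] xs_eq[of L "-1"] in \<open>simp_all add: xs_def\<close>)
  then have "xs \<in> excursion_words M"
    unfolding excursion_words_conv_nth by blast
  moreover have "map z xs = p"
    using p_i L by (simp add: list_eq_iff_nth_eq xs_def)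
  ultimately show "p \<in> map z ` excursion_words M"
    by blast
qed

lemma map_excursion_words_subset_scat_seqs:
  fixes z :: "int \<Rightarrow> real"
  assumes inj: "inj_on z {-1..int M}"
  shows "map z ` excursion_words M \<subseteq> scat_seqs z M"
proof
  fix p
  assume "p \<in> map z ` excursion_words M"
  then obtain xs where p: "p = map z xs" and "xs \<in> excursion_words M"
    by blast
  then obtain L where L: "length xs = Suc L" "2 \<le> L"
    "xs ! 0 = -1" "xs ! L = -1" "\<forall>i. 1 \<le> i \<and> i \<le> L - 1 \<longrightarrow> xs ! i \<in> {0..int M}"
    "\<forall>i<L. unit_step (xs ! i) (xs ! Suc i)"
    unfolding excursion_words_conv_nth by blast
  have range: "xs ! i \<in> {-1..int M}" if "i \<le> L" for i
  proof (cases "i = 0 \<or> i = L")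
    case False
    with that have "1 \<le> i \<and> i \<le> L - 1"
      by auto
    with L(5) have "xs ! i \<in> {0..int M}"
      by blast
    then show ?thesis
      by simp
  qed (use L in auto)
  have "\<forall>i<L. \<exists>j\<in>{-1..int M - 1}. {p ! i, p ! Suc i} = {z j, z (j + 1)}"
    using L(1,6) range p doubleton_eq_consecutive_iff_unit_step[OF inj] by simp
  then show "p \<in> scat_seqs z M"
    unfolding scat_seqs_def using L p by auto
qed

lemma scat_seqs_eq_image_excursion:
  fixes z :: "int \<Rightarrow> real"
  assumes "inj_on z {-1..int M}"
  shows "scat_seqs z M = (\<lambda>t. map z (excursion 0 t)) ` {t. height_le M t}"
proof -
  have "scat_seqs z M = map z ` excursion_words M"
    using assms scat_seqs_subset_map_excursion_words map_excursion_words_subset_scat_seqs by blast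
  then show ?thesis
    by (simp add: excursion_words_eq_image image_image)
qed

lemma set_excursion_subset: "height_le M t \<Longrightarrow> set (excursion 0 t) \<subseteq> {-1..int M}"
  using contour_ge[of _ 0 t] height_le_iff_contour_le[of M t 0] by (force simp: excursion_def)

lemma inj_on_map_excursion:
  fixes z :: "int \<Rightarrow> real"
  assumes inj: "inj_on z {-1..int M}"
  shows "inj_on (\<lambda>t. map z (excursion 0 t)) {t. height_le M t}"
proof (rule inj_onI)
  fix t t'
  assume "t \<in> {t. height_le M t}" "t' \<in> {t. height_le M t}"
    and eq: "map z (excursion 0 t) = map z (excursion 0 t')"
  then have "set (excursion 0 t) \<union> set (excursion 0 t') \<subseteq> {-1..int M}"
    using set_excursion_subset by blast
  with eq have "excursion 0 t = excursion 0 t'"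
    using map_inj_on inj_on_subset[OF inj] by blast
  then show "t = t'"
    by (simp add: excursion_def contour_inject)
qed

lemma kappa_beta_excursion:
  fixes z :: "int \<Rightarrow> real"
  assumes inj: "inj_on z {-1..int M}" and "height_le M t" "n \<le> M"
  shows "kappa z M (map z (excursion 0 t)) n = level_size [t] n \<and>
    beta z M (map z (excursion 0 t)) n = level_inner [t] n"
proof -
  define xs where "xs = excursion 0 t"
  define P where "P = (\<lambda>i. map z xs ! i \<in> z ` {int n..int M})"
  have P_iff: "P i \<longleftrightarrow> int n \<le> xs ! i" if "i < length xs" for i
  proof -
    have "xs ! i \<in> {-1..int M}"
      using set_excursion_subset[OF \<open>height_le M t\<close>] nth_mem[OF that] by (auto simp: xs_def)
    moreover from this have "P i \<longleftrightarrow> xs ! i \<in> {int n..int M}"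
      using that \<open>n \<le> M\<close> by (simp add: P_def inj_on_image_mem_iff[OF inj])
    ultimately show ?thesis
      by auto
  qed
  have "\<not> P 0"
    using P_iff[of 0] by (simp add: xs_def excursion_def)
  have "kappa z M (map z xs) n = runs_count 1 P (length xs - 1)"
    by (simp add: kappa_def P_def)
  also have "\<dots> = card {i. i < length xs - 1 \<and> \<not> P i \<and> P (Suc i)}"
    using \<open>\<not> P 0\<close> by (rule runs_count_1_eq_card_up_steps)
  also have "\<dots> = up_crossings (int n) xs"
    unfolding up_crossings_eq_card by (rule arg_cong[where f = card]) (auto simp: P_iff)
  also have "\<dots> = level_size [t] n"
    using up_crossings_excursion[of 0 n t] by (simp add: xs_def)
  finally have kappa: "kappa z M (map z xs) n = level_size [t] n" .
  have "beta z M (map z xs) n = runs_count 2 P (length xs - 1)"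
    by (simp add: beta_def P_def)
  also have "\<dots> = card {i. Suc i < length xs - 1 \<and> \<not> P i \<and> P (Suc i) \<and> P (Suc (Suc i))}"
    using \<open>\<not> P 0\<close> by (rule runs_count_2_eq_card_up_steps)
  also have "\<dots> = long_up_crossings (int n) xs"
    unfolding long_up_crossings_eq_card by (rule arg_cong[where f = card]) (auto simp: P_iff)
  also have "\<dots> = level_inner [t] n"
    using up_crossings_excursion[of 0 n t] by (simp add: xs_def)
  finally show ?thesis
    using kappa by (simp add: xs_def)
qed

lemma scat_seqs_with_profile_eq_image:
  fixes z :: "int \<Rightarrow> real"
  assumes inj: "inj_on z {-1..int M}"
  shows "{p \<in> scat_seqs z M. \<forall>n\<le>M. kappa z M p n = k n \<and> beta z M p n = b n} =
    (\<lambda>t. map z (excursion 0 t)) ` {t. [t] \<in> forests_with_profile M k b}"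
proof -
  have "{t. [t] \<in> forests_with_profile M k b} =
      {t \<in> {t. height_le M t}. \<forall>n\<le>M. kappa z M (map z (excursion 0 t)) n = k n \<and>
         beta z M (map z (excursion 0 t)) n = b n}"
    using kappa_beta_excursion[OF inj] by (auto simp: forests_with_profile_def)
  then show ?thesis
    unfolding scat_seqs_eq_image_excursion[OF inj] by (auto simp: image_iff)
qed

lemma card_trees_with_profile:
  assumes "k 0 = 1"
  shows "finite {t. [t] \<in> forests_with_profile M k b} \<and>
    card {t. [t] \<in> forests_with_profile M k b} = card (forests_with_profile M k b)"
proof -
  have "forests_with_profile M k b = (\<lambda>t. [t]) ` {t. [t] \<in> forests_with_profile M k b}"
  proof (rule set_eqI, rule iffI)
    fix f
    assume f: "f \<in> forests_with_profile M k b"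
    then have "length f = 1"
      using assms by (auto simp: forests_with_profile_def)
    with f show "f \<in> (\<lambda>t. [t]) ` {t. [t] \<in> forests_with_profile M k b}"
      by (auto simp: length_Suc_conv)
  qed auto
  moreover have "inj (\<lambda>t :: tree. [t])"
    by (simp add: inj_def)
  ultimately show ?thesis
    using card_forests_with_profile[of M k b]
    by (metis card_image finite_imageD inj_on_subset subset_UNIV)
qed

lemma num_compositions_eq_choose:
  "min 1 s \<le> b \<Longrightarrow> b \<le> s \<Longrightarrow> num_compositions s b = (s - min 1 s) choose (b - min 1 s)"
  by (cases "s = 0") (auto simp: num_compositions_def)

theorem lemma2:
  fixes z :: "int \<Rightarrow> real" and M :: nat and k :: "nat \<Rightarrow> nat" and b :: "nat \<Rightarrow> int"
  assumes "strict_mono_on {-1..int M} z"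
    and "M \<ge> 1"
    and "frakL M k"
    and "\<forall>n\<le>M. int (min 1 (ktilde M k n)) \<le> b n \<and>
                b n \<le> int (min (k n) (ktilde M k n))"
  shows "finite {p \<in> scat_seqs z M. \<forall>n\<le>M. kappa z M p n = k n \<and> int (beta z M p n) = b n} \<and>
         card {p \<in> scat_seqs z M. \<forall>n\<le>M. kappa z M p n = k n \<and> int (beta z M p n) = b n}
         = (\<Prod>n\<le>M. (k n choose nat (b n)) *
              ((ktilde M k n - min 1 (ktilde M k n)) choose nat (b n - int (min 1 (ktilde M k n)))))"
proof -
  have inj: "inj_on z {-1..int M}"
    using assms(1) by (rule strict_mono_on_imp_inj_on)
  define b' where "b' n = nat (b n)" for n
  have b: "b n = int (b' n)" "min 1 (ktilde M k n) \<le> b' n" "b' n \<le> ktilde M k n" if "n \<le> M" for n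
    using assms(4) that by (auto simp: b'_def)
  let ?T = "{t. [t] \<in> forests_with_profile M k b'}"
  have "{p \<in> scat_seqs z M. \<forall>n\<le>M. kappa z M p n = k n \<and> int (beta z M p n) = b n} =
      (\<lambda>t. map z (excursion 0 t)) ` ?T"
    using scat_seqs_with_profile_eq_image[OF inj, of k b'] b by auto
  moreover have "inj_on (\<lambda>t. map z (excursion 0 t)) ?T"
    using inj_on_map_excursion[OF inj] by (rule inj_on_subset) (auto simp: forests_with_profile_def)
  moreover have "finite ?T" "card ?T = (\<Prod>n\<le>M. (k n choose b' n) * num_compositions (ktilde M k n) (b' n))"
    using card_trees_with_profile[of k M b'] card_forests_with_profile[of M k b'] assms(3)
    by (simp_all add: frakL_def card_weak_compositions)
  moreover have "(\<Prod>n\<le>M. (k n choose b' n) * num_compositions (ktilde M k n) (b' n)) =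
      (\<Prod>n\<le>M. (k n choose nat (b n)) *
         ((ktilde M k n - min 1 (ktilde M k n)) choose nat (b n - int (min 1 (ktilde M k n)))))"
    using b by (intro prod.cong) (simp_all add: num_compositions_eq_choose nat_diff_distrib)
  ultimately show ?thesis
    by (simp add: card_image)
qed

end
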